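(* Consider the delayed online convex optimization setting described in the context, with a non-empty, closed, convex domain $\mathcal{X}\subseteq\mathbb{R}^n$. Let $\lambda>0$ and $G\ge 0$, and assume that each loss $f_t$ ($t\in[T]$) is $\lambda$-strongly convex with respect to the Euclidean norm, i.e. $f_t(y)\ge f_t(x)+\langle\nabla f_t(x),y-x\rangle+\frac{\lambda}{2}\|y-x\|_2^2$ for all $x,y\in\mathcal{X}$, and that $\max_{x\in\mathcal{X}}\|\nabla f_t(x)\|_2\le G$. Consider the learner (Delayed FTRL) that plays an arbitrary $x_1\in\mathcal{X}$ and, for each $t\ge 1$, after observing $g_\tau$ for all $\tau\in o_{t+1}\setminus o_t$, plays at round $t+1$ $$x_{t+1}\in\arg\min_{x\in\mathcal{X}}\ \sum_{\tau\in o_{t+1}}\langle g_\tau,x\rangle+\frac{\lambda}{2}\sum_{s=1}^{t}\|x-x_s\|_2^2 .$$ Then $$\mathrm{Reg}_T=\mathcal{O}\left(\frac{G^2}{\lambda}\left(\ln T+\min\left\{\sigma_{\max}\ln T,\sqrt{d_{\mathrm{tot}}}\right\}\right)\right),$$ i.e. there is an absolute numerical constant $C>0$ (independent of $T,n,\lambda,G$, the losses and the delays) such that for every $T\ge 2$, $\mathrm{Reg}_T\le C\,\frac{G^2}{\lambda}\left(\ln T+\min\{\sigma_{\max}\ln T,\sqrt{d_{\mathrm{tot}}}\}\right)$.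
   Context: Delayed OCO setting: $T\ge1$ and $n\ge1$ are integers, $[T]=\{1,\dots,T\}$. For each round $t\in[T]$ the learner chooses $x_t\in\mathcal{X}$ and incurs loss $f_t(x_t)$, where $f_t:\mathcal{X}\to\mathbb{R}$ is convex and differentiable (and may be chosen adversarially). The gradient $g_t=\nabla f_t(x_t)$ is revealed to the learner only at the end of round $t+d_t$, where $d_t\in\{0,1,2,\dots\}$ is an arbitrary delay unknown to the learner; it is assumed that $t+d_t\le T$ for all $t\in[T]$. For $t\ge 1$ define $o_t=\{\tau\in\mathbb{N}:\tau+d_\tau<t\}\subseteq[t-1]$ (rounds whose gradients are available before round $t$) and $m_t=[t-1]\setminus o_t$. Let $\sigma_{\max}=\max_{t\in[T]}|m_t|$, $d_{\max}=\max_{t\in[T]}d_t$, and $d_{\mathrm{tot}}=\sum_{t=1}^T d_t$. The regret against $u\in\mathcal{X}$ is $\mathrm{Reg}_T(u)=\sum_{t=1}^T(f_t(x_t)-f_t(u))$ and $\mathrm{Reg}_T=\sup_{u\in\mathcal{X}}\mathrm{Reg}_T(u)$. *)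

theory Defs
  imports "HOL-Analysis.Analysis"
begin

text \<open>Euclidean space R^n, for n varying inside the statement, is represented by
  vectors v :: nat => real with v i = 0 for all i >= n (explicit carrier).\<close>

definition Rn :: "nat \<Rightarrow> (nat \<Rightarrow> real) set" where
  "Rn n = {v. \<forall>i\<ge>n. v i = 0}"

definition ip :: "nat \<Rightarrow> (nat \<Rightarrow> real) \<Rightarrow> (nat \<Rightarrow> real) \<Rightarrow> real" where
  "ip n u v = (\<Sum>i<n. u i * v i)"

definition nrm :: "nat \<Rightarrow> (nat \<Rightarrow> real) \<Rightarrow> real" where
  "nrm n v = sqrt (ip n v v)"

definition vdiff :: "(nat \<Rightarrow> real) \<Rightarrow> (nat \<Rightarrow> real) \<Rightarrow> (nat \<Rightarrow> real)" where
  "vdiff u v = (\<lambda>i. u i - v i)"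

definition cvx_comb :: "real \<Rightarrow> (nat \<Rightarrow> real) \<Rightarrow> (nat \<Rightarrow> real) \<Rightarrow> (nat \<Rightarrow> real)" where
  "cvx_comb \<theta> x y = (\<lambda>i. \<theta> * x i + (1 - \<theta>) * y i)"

definition rn_closed :: "nat \<Rightarrow> (nat \<Rightarrow> real) set \<Rightarrow> bool" where
  "rn_closed n X \<longleftrightarrow> (\<forall>s y. (\<forall>k. s k \<in> X) \<and> y \<in> Rn n \<and>
      (\<lambda>k. nrm n (vdiff (s k) y)) \<longlonglongrightarrow> 0 \<longrightarrow> y \<in> X)"

definition cvx_set :: "(nat \<Rightarrow> real) set \<Rightarrow> bool" where
  "cvx_set X \<longleftrightarrow> (\<forall>x\<in>X. \<forall>y\<in>X. \<forall>\<theta>. 0 \<le> \<theta> \<and> \<theta> \<le> 1 \<longrightarrow> cvx_comb \<theta> x y \<in> X)"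

definition cvx_fun :: "(nat \<Rightarrow> real) set \<Rightarrow> ((nat \<Rightarrow> real) \<Rightarrow> real) \<Rightarrow> bool" where
  "cvx_fun X f \<longleftrightarrow> (\<forall>x\<in>X. \<forall>y\<in>X. \<forall>\<theta>. 0 \<le> \<theta> \<and> \<theta> \<le> 1 \<longrightarrow>
      f (cvx_comb \<theta> x y) \<le> \<theta> * f x + (1 - \<theta>) * f y)"

definition has_grad :: "nat \<Rightarrow> ((nat \<Rightarrow> real) \<Rightarrow> real) \<Rightarrow> (nat \<Rightarrow> real) \<Rightarrow> (nat \<Rightarrow> real) \<Rightarrow> bool" where
  "has_grad n f g x \<longleftrightarrow> g \<in> Rn n \<and>
     (\<forall>\<epsilon>>0. \<exists>\<delta>>0. \<forall>y\<in>Rn n. nrm n (vdiff y x) < \<delta> \<longrightarrow>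
        \<bar>f y - f x - ip n g (vdiff y x)\<bar> \<le> \<epsilon> * nrm n (vdiff y x))"

definition strongly_cvx :: "nat \<Rightarrow> real \<Rightarrow> (nat \<Rightarrow> real) set \<Rightarrow> ((nat \<Rightarrow> real) \<Rightarrow> real)
    \<Rightarrow> ((nat \<Rightarrow> real) \<Rightarrow> (nat \<Rightarrow> real)) \<Rightarrow> bool" where
  "strongly_cvx n lam X f gradf \<longleftrightarrow> (\<forall>x\<in>X. \<forall>y\<in>X.
      f y \<ge> f x + ip n (gradf x) (vdiff y x) + lam / 2 * (nrm n (vdiff y x))\<^sup>2)"

text \<open>Delay bookkeeping: o_t, m_t, sigma_max, d_tot (rounds are 1,2,...).\<close>
definition obs :: "(nat \<Rightarrow> nat) \<Rightarrow> nat \<Rightarrow> nat set" where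
  "obs d t = {\<tau>. 1 \<le> \<tau> \<and> \<tau> + d \<tau> < t}"

definition miss :: "(nat \<Rightarrow> nat) \<Rightarrow> nat \<Rightarrow> nat set" where
  "miss d t = {1..<t} - obs d t"

definition sigma_max :: "(nat \<Rightarrow> nat) \<Rightarrow> nat \<Rightarrow> nat" where
  "sigma_max d T = Max ((\<lambda>t. card (miss d t)) ` {1..T})"

definition d_tot :: "(nat \<Rightarrow> nat) \<Rightarrow> nat \<Rightarrow> nat" where
  "d_tot d T = (\<Sum>t=1..T. d t)"

text \<open>Delayed FTRL objective at the end of round t (used to pick x_{t+1}),
  with g_tau = gradf tau (x tau).\<close>
definition ftrl_obj :: "nat \<Rightarrow> real \<Rightarrow> (nat \<Rightarrow> nat) \<Rightarrow> (nat \<Rightarrow> (nat \<Rightarrow> real) \<Rightarrow> (nat \<Rightarrow> real))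
    \<Rightarrow> (nat \<Rightarrow> (nat \<Rightarrow> real)) \<Rightarrow> nat \<Rightarrow> (nat \<Rightarrow> real) \<Rightarrow> real" where
  "ftrl_obj n lam d gradf x t y =
     (\<Sum>\<tau>\<in>obs d (t + 1). ip n (gradf \<tau> (x \<tau>)) y)
     + lam / 2 * (\<Sum>s=1..t. (nrm n (vdiff y (x s)))\<^sup>2)"

definition delayed_ftrl :: "nat \<Rightarrow> real \<Rightarrow> (nat \<Rightarrow> real) set \<Rightarrow> (nat \<Rightarrow> nat)
    \<Rightarrow> (nat \<Rightarrow> (nat \<Rightarrow> real) \<Rightarrow> (nat \<Rightarrow> real)) \<Rightarrow> (nat \<Rightarrow> (nat \<Rightarrow> real)) \<Rightarrow> nat \<Rightarrow> bool" where
  "delayed_ftrl n lam X d gradf x T \<longleftrightarrow> x 1 \<in> X \<and>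
     (\<forall>t. 1 \<le> t \<and> t < T \<longrightarrow> x (t + 1) \<in> X \<and>
        (\<forall>y\<in>X. ftrl_obj n lam d gradf x t (x (t + 1)) \<le> ftrl_obj n lam d gradf x t y))"

end

theory Submission
  imports Defs
begin

text \<open>
  Write \<open>\<ell>\<^sub>t(y) = \<langle>g\<^sub>t, y\<rangle> + \<lambda>/2 \<parallel>y - x\<^sub>t\<parallel>\<^sup>2\<close>. By strong convexity
  \<open>f\<^sub>t(x\<^sub>t) - f\<^sub>t(u) \<le> \<ell>\<^sub>t(x\<^sub>t) - \<ell>\<^sub>t(u)\<close>, and Delayed FTRL minimises \<open>\<Sum>\<^bsub>s < t\<^esub> \<ell>\<^sub>s\<close>
  with the gradients of the missing rounds \<open>m\<^sub>t\<close> dropped. Compare it with the undelayed leader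
  \<open>y\<^sub>t = argmin \<Sum>\<^bsub>s < t\<^esub> \<ell>\<^sub>s\<close>. Both objectives are \<open>\<lambda>(t - 1)\<close>-strongly convex and differ by a
  linear term of norm at most \<open>G |m\<^sub>t|\<close>, so \<open>\<parallel>x\<^sub>t - y\<^sub>t\<parallel> \<le> G |m\<^sub>t| / (\<lambda>(t - 1))\<close>; consecutive
  leaders move by \<open>O(G / (\<lambda> t))\<close>, and be-the-leader absorbs the comparator. Hence
  \<open>Reg\<^sub>T \<le> G\<^sup>2/\<lambda> (4 H\<^sub>T + \<Sum>\<^sub>t |m\<^sub>t| / (t - 1))\<close>. The last sum is at most \<open>2 \<sigma>\<^sub>m\<^sub>a\<^sub>x H\<^sub>T\<close>, and,
  since \<open>|m\<^sub>t| \<le> t - 1\<close> and \<open>\<Sum>\<^sub>t |m\<^sub>t| \<le> d\<^sub>t\<^sub>o\<^sub>t\<close>, also at most \<open>2 \<surd>d\<^sub>t\<^sub>o\<^sub>t\<close>.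
\<close>

section \<open>Euclidean geometry on the explicit carrier\<close>

lemma nrm_nonneg: "0 \<le> nrm n v"
  unfolding nrm_def ip_def by (simp add: sum_nonneg)

lemma nrm_sq: "(nrm n v)\<^sup>2 = (\<Sum>i<n. (v i)\<^sup>2)"
  unfolding nrm_def ip_def by (simp add: sum_nonneg power2_eq_square)

lemma nrm_vdiff_self [simp]: "nrm n (vdiff v v) = 0"
  unfolding nrm_def ip_def vdiff_def by simp

lemma nrm_vdiff_commute: "nrm n (vdiff u v) = nrm n (vdiff v u)"
  unfolding nrm_def ip_def vdiff_def by (simp add: algebra_simps)

lemma abs_coord_le_nrm: "i < n \<Longrightarrow> \<bar>v i\<bar> \<le> nrm n v"
proof -
  assume "i < n"
  then have "(v i)\<^sup>2 \<le> (nrm n v)\<^sup>2"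
    unfolding nrm_sq by (intro member_le_sum) auto
  then show ?thesis
    using nrm_nonneg[of n v] by (simp add: abs_le_square_iff[symmetric])
qed

lemma ip_vdiff: "ip n a (vdiff y z) = ip n a y - ip n a z"
  unfolding ip_def vdiff_def by (simp add: algebra_simps sum_subtractf)

lemma ip_le_nrm_mult: "ip n u v \<le> nrm n u * nrm n v"
proof -
  have "ip n u v \<le> (\<Sum>i<n. \<bar>u i\<bar> * \<bar>v i\<bar>)"
    unfolding ip_def by (intro sum_mono) (metis abs_ge_self abs_mult)
  also have "\<dots> \<le> L2_set u {..<n} * L2_set v {..<n}"
    by (rule L2_set_mult_ineq)
  also have "\<dots> = nrm n u * nrm n v"
    unfolding L2_set_def nrm_def ip_def by (simp add: power2_eq_square)
  finally show ?thesis .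
qed

lemma ip_le_mult_nrm: "nrm n a \<le> G \<Longrightarrow> ip n a v \<le> G * nrm n v"
  using ip_le_nrm_mult[of n a v] nrm_nonneg[of n v] by (meson mult_right_mono order_trans)

lemma ip_cvx_comb: "ip n a (cvx_comb \<theta> z w) = ip n a w + \<theta> * (ip n a z - ip n a w)"
  unfolding ip_def cvx_comb_def
  by (simp add: sum_distrib_left sum_subtractf[symmetric] sum.distrib[symmetric] algebra_simps)

lemma nrm_sq_cvx_comb:
  "(nrm n (vdiff (cvx_comb \<theta> z w) p))\<^sup>2 = (nrm n (vdiff w p))\<^sup>2
     + \<theta> * ((nrm n (vdiff z p))\<^sup>2 - (nrm n (vdiff w p))\<^sup>2 - (nrm n (vdiff z w))\<^sup>2)
     + \<theta>\<^sup>2 * (nrm n (vdiff z w))\<^sup>2"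
  unfolding nrm_sq vdiff_def cvx_comb_def
  by (simp add: sum_distrib_left sum_subtractf[symmetric] sum.distrib[symmetric]
      power2_eq_square algebra_simps)

lemma nonneg_if_nonneg_quadratic_near_zero:
  fixes D Q :: real
  assumes "\<And>\<theta>. 0 < \<theta> \<Longrightarrow> \<theta> \<le> 1 \<Longrightarrow> 0 \<le> \<theta> * D + \<theta>\<^sup>2 * Q"
  shows "0 \<le> D"
proof (rule ccontr)
  assume "\<not> 0 \<le> D"
  define \<theta> where "\<theta> = min 1 (- D / (2 * (\<bar>Q\<bar> + 1)))"
  have "0 < - D / (2 * (\<bar>Q\<bar> + 1))"
    using \<open>\<not> 0 \<le> D\<close> by (intro divide_pos_pos) auto
  then have \<theta>: "0 < \<theta>" "\<theta> \<le> 1"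
    by (auto simp: \<theta>_def)
  have "\<theta> \<le> - D / (2 * (\<bar>Q\<bar> + 1))"
    by (simp add: \<theta>_def)
  then have "\<theta> * (2 * (\<bar>Q\<bar> + 1)) \<le> - D / (2 * (\<bar>Q\<bar> + 1)) * (2 * (\<bar>Q\<bar> + 1))"
    by (intro mult_right_mono) auto
  then have "\<theta> * (2 * (\<bar>Q\<bar> + 1)) \<le> - D"
    by simp
  moreover have "\<theta> * (2 * (\<bar>Q\<bar> + 1)) = 2 * (\<theta> * \<bar>Q\<bar>) + 2 * \<theta>"
    by (simp add: algebra_simps)
  ultimately have "D + \<theta> * Q < 0"
    using \<theta> \<open>\<not> 0 \<le> D\<close> abs_ge_self[of Q] mult_left_mono[of Q "\<bar>Q\<bar>" \<theta>] by linarith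
  then have "\<theta> * D + \<theta>\<^sup>2 * Q < 0"
    using \<theta> mult_pos_neg[of \<theta> "D + \<theta> * Q"] by (simp add: algebra_simps power2_eq_square)
  then show False
    using assms \<theta> by force
qed

lemma le_divide_if_mult_sq_le:
  fixes a b e :: real
  assumes "0 < a" "0 \<le> b" "0 \<le> e" "a * e\<^sup>2 \<le> b * e"
  shows "e \<le> b / a"
proof (cases "e = 0")
  case False
  then have "(a * e) * e \<le> b * e"
    using assms by (simp add: power2_eq_square mult.assoc)
  then have "a * e \<le> b"
    using False assms(3) by simp
  then show ?thesis
    using assms(1) by (simp add: pos_le_divide_eq mult.commute)
qed (use assms in simp)

section \<open>The proximal FTRL objective\<close>

text \<open>With \<open>A = o\<^sub>t\<^sub>+\<^sub>1\<close> and \<open>S = [t]\<close> this is the Delayed FTRL objective; with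
  \<open>A = S = [t]\<close> it is the objective of undelayed FTRL.\<close>
definition prox_lin :: "nat \<Rightarrow> real \<Rightarrow> nat set \<Rightarrow> nat set \<Rightarrow> (nat \<Rightarrow> nat \<Rightarrow> real)
    \<Rightarrow> (nat \<Rightarrow> nat \<Rightarrow> real) \<Rightarrow> (nat \<Rightarrow> real) \<Rightarrow> real" where
  "prox_lin n c A S g x y =
     (\<Sum>\<tau>\<in>A. ip n (g \<tau>) y) + c / 2 * (\<Sum>s\<in>S. (nrm n (vdiff y (x s)))\<^sup>2)"

lemma prox_lin_cvx_comb:
  "prox_lin n c A S g x (cvx_comb \<theta> z w) = prox_lin n c A S g x w
     + \<theta> * (prox_lin n c A S g x z - prox_lin n c A S g x w - c * card S / 2 * (nrm n (vdiff z w))\<^sup>2)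
     + \<theta>\<^sup>2 * (c * card S / 2 * (nrm n (vdiff z w))\<^sup>2)"
  unfolding prox_lin_def ip_cvx_comb nrm_sq_cvx_comb
  by (simp add: sum_distrib_left sum_subtractf sum.distrib algebra_simps)

lemma prox_lin_midpoint:
  "prox_lin n c A S g x (cvx_comb (1/2) z w) =
     (prox_lin n c A S g x z + prox_lin n c A S g x w) / 2 - c * card S / 8 * (nrm n (vdiff z w))\<^sup>2"
  unfolding prox_lin_cvx_comb by (simp add: power2_eq_square field_simps)

lemma prox_lin_quadratic_growth:
  assumes "cvx_set X" and "w \<in> X" and "z \<in> X"
    and min: "\<And>v. v \<in> X \<Longrightarrow> prox_lin n c A S g x w \<le> prox_lin n c A S g x v"
  shows "prox_lin n c A S g x w + c * card S / 2 * (nrm n (vdiff z w))\<^sup>2 \<le> prox_lin n c A S g x z"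
proof -
  let ?F = "prox_lin n c A S g x" and ?Q = "c * card S / 2 * (nrm n (vdiff z w))\<^sup>2"
  have "0 \<le> \<theta> * (?F z - ?F w - ?Q) + \<theta>\<^sup>2 * ?Q" if "0 < \<theta>" "\<theta> \<le> 1" for \<theta>
  proof -
    have "cvx_comb \<theta> z w \<in> X"
      using assms that unfolding cvx_set_def by simp
    then have "?F w \<le> ?F (cvx_comb \<theta> z w)"
      by (rule min)
    then show ?thesis
      unfolding prox_lin_cvx_comb by simp
  qed
  then have "0 \<le> ?F z - ?F w - ?Q"
    by (rule nonneg_if_nonneg_quadratic_near_zero)
  then show ?thesis
    by simp
qed

lemma prox_lin_bounded_below:
  assumes "finite S" and "s \<in> S" and "0 < c"
  shows "\<exists>K. \<forall>y. K \<le> prox_lin n c A S g x y"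
proof (intro exI allI)
  fix y
  define a where "a = (\<lambda>i. \<Sum>\<tau>\<in>A. g \<tau> i)"
  define r where "r = nrm n (vdiff y (x s))"
  have lin: "(\<Sum>\<tau>\<in>A. ip n (g \<tau>) y) = ip n a y"
    unfolding a_def ip_def by (simp add: sum_distrib_right sum.swap[of _ A])
  have "ip n a (vdiff (x s) y) \<le> nrm n a * r"
    unfolding r_def nrm_vdiff_commute[of n y] by (rule ip_le_nrm_mult)
  then have "ip n a (x s) - nrm n a * r \<le> ip n a y"
    by (simp add: ip_vdiff)
  moreover have "r\<^sup>2 \<le> (\<Sum>s\<in>S. (nrm n (vdiff y (x s)))\<^sup>2)"
    unfolding r_def using assms(1,2) by (intro member_le_sum) auto
  then have "c / 2 * r\<^sup>2 \<le> c / 2 * (\<Sum>s\<in>S. (nrm n (vdiff y (x s)))\<^sup>2)"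
    using assms(3) by simp
  moreover have "0 \<le> (c * r - nrm n a)\<^sup>2 / (2 * c)"
    using assms(3) by simp
  then have "- (nrm n a)\<^sup>2 / (2 * c) \<le> c / 2 * r\<^sup>2 - nrm n a * r"
    using assms(3) by (simp add: field_simps power2_eq_square)
  ultimately show "ip n a (x s) - (nrm n a)\<^sup>2 / (2 * c) \<le> prox_lin n c A S g x y"
    unfolding prox_lin_def lin by linarith
qed

lemma prox_lin_tendsto:
  assumes "\<And>i. i < n \<Longrightarrow> (\<lambda>k. s k i) \<longlonglongrightarrow> y i"
  shows "(\<lambda>k. prox_lin n c A S g x (s k)) \<longlonglongrightarrow> prox_lin n c A S g x y"
  unfolding prox_lin_def nrm_def ip_def vdiff_def by (intro tendsto_intros) (auto intro: assms)

lemma rn_closed_Cauchy_limit: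
  assumes closed: "rn_closed n X" and s_X: "\<And>k. s k \<in> X"
    and Cauchy_nrm: "\<And>e. 0 < e \<Longrightarrow> \<exists>M. \<forall>k\<ge>M. \<forall>j\<ge>M. nrm n (vdiff (s k) (s j)) < e"
  shows "\<exists>y\<in>X. \<forall>i<n. (\<lambda>k. s k i) \<longlonglongrightarrow> y i"
proof -
  have "Cauchy (\<lambda>k. s k i)" if "i < n" for i
  proof (rule CauchyI)
    fix e :: real
    assume "0 < e"
    then obtain M where M: "\<forall>k\<ge>M. \<forall>j\<ge>M. nrm n (vdiff (s k) (s j)) < e"
      using Cauchy_nrm by blast
    show "\<exists>M. \<forall>k\<ge>M. \<forall>j\<ge>M. norm (s k i - s j i) < e"
    proof (intro exI allI impI)
      fix k j
      assume "M \<le> k" "M \<le> j"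
      then have "nrm n (vdiff (s k) (s j)) < e"
        using M by blast
      moreover have "\<bar>s k i - s j i\<bar> \<le> nrm n (vdiff (s k) (s j))"
        using abs_coord_le_nrm[OF that, of "vdiff (s k) (s j)"] by (simp add: vdiff_def)
      ultimately show "norm (s k i - s j i) < e"
        by simp
    qed
  qed
  then have lim: "(\<lambda>k. s k i) \<longlonglongrightarrow> lim (\<lambda>k. s k i)" if "i < n" for i
    using that by (simp add: Cauchy_convergent_iff convergent_LIMSEQ_iff)
  define y where "y = (\<lambda>i. if i < n then lim (\<lambda>k. s k i) else 0)"
  have "(\<lambda>k. nrm n (vdiff (s k) y)) \<longlonglongrightarrow> sqrt (\<Sum>i<n. (y i - y i) * (y i - y i))"
    unfolding nrm_def ip_def vdiff_def by (intro tendsto_intros) (auto simp: y_def intro: lim)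
  moreover have "y \<in> Rn n"
    by (simp add: Rn_def y_def)
  ultimately have "y \<in> X"
    using closed s_X unfolding rn_closed_def by auto
  moreover have "(\<lambda>k. s k i) \<longlonglongrightarrow> y i" if "i < n" for i
    using lim[OF that] that by (simp add: y_def)
  ultimately show ?thesis
    by blast
qed

lemma prox_lin_minimizing_seq_Cauchy:
  assumes convex: "cvx_set X" and "finite S" and "S \<noteq> {}" and "0 < c"
    and lower: "\<And>z. z \<in> X \<Longrightarrow> m \<le> prox_lin n c A S g x z"
    and s_X: "\<And>k. s k \<in> X"
    and s_F: "\<And>k. prox_lin n c A S g x (s k) < m + inverse (real (Suc k))"
    and "0 < e"
  shows "\<exists>M. \<forall>k\<ge>M. \<forall>j\<ge>M. nrm n (vdiff (s k) (s j)) < e"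
proof -
  let ?F = "prox_lin n c A S g x"
  define \<kappa> where "\<kappa> = c * card S"
  define \<epsilon> :: "nat \<Rightarrow> real" where "\<epsilon> k = inverse (real (Suc k))" for k
  have "0 < \<kappa>"
    using assms by (simp add: \<kappa>_def card_gt_0_iff)
  have "(\<lambda>M. 8 / \<kappa> * \<epsilon> M) \<longlonglongrightarrow> 8 / \<kappa> * 0"
    unfolding \<epsilon>_def by (intro tendsto_intros LIMSEQ_inverse_real_of_nat)
  from order_tendstoD(2)[OF this, of "e\<^sup>2"]
  have "\<forall>\<^sub>F M in sequentially. 8 / \<kappa> * \<epsilon> M < e\<^sup>2"
    using \<open>0 < e\<close> by simp
  then obtain M where M: "\<epsilon> M < \<kappa> / 8 * e\<^sup>2"
    using \<open>0 < \<kappa>\<close> by (auto simp: eventually_sequentially field_simps)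
  have "nrm n (vdiff (s k) (s j)) < e" if "M \<le> k" "M \<le> j" for k j
  proof (rule power2_less_imp_less)
    have "cvx_comb (1/2) (s k) (s j) \<in> X"
      using convex s_X unfolding cvx_set_def by simp
    then have "m \<le> ?F (cvx_comb (1/2) (s k) (s j))"
      by (rule lower)
    moreover have "\<epsilon> k \<le> \<epsilon> M" "\<epsilon> j \<le> \<epsilon> M"
      using that by (simp_all add: \<epsilon>_def le_imp_inverse_le)
    moreover have "(?F (s k) + ?F (s j)) / 2 - m < \<epsilon> M"
      using s_F[of k] s_F[of j] calculation(2,3) unfolding \<epsilon>_def by argo
    ultimately have "\<kappa> / 8 * (nrm n (vdiff (s k) (s j)))\<^sup>2 < \<kappa> / 8 * e\<^sup>2"
      using M unfolding prox_lin_midpoint \<kappa>_def by linarith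
    then show "(nrm n (vdiff (s k) (s j)))\<^sup>2 < e\<^sup>2"
      using \<open>0 < \<kappa>\<close> by simp
  qed (use \<open>0 < e\<close> in simp)
  then show ?thesis
    by blast
qed

lemma prox_lin_has_min:
  assumes closed: "rn_closed n X" and convex: "cvx_set X" and "X \<noteq> {}"
    and "finite S" and "S \<noteq> {}" and "0 < c"
  shows "\<exists>w\<in>X. \<forall>z\<in>X. prox_lin n c A S g x w \<le> prox_lin n c A S g x z"
proof -
  let ?F = "prox_lin n c A S g x"
  obtain s0 where "s0 \<in> S"
    using \<open>S \<noteq> {}\<close> by blast
  then obtain K where "\<And>y. K \<le> ?F y"
    using prox_lin_bounded_below[OF \<open>finite S\<close> _ \<open>0 < c\<close>] by blast
  define m where "m = Inf (?F ` X)"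
  have m_le: "m \<le> ?F z" if "z \<in> X" for z
    unfolding m_def using that \<open>\<And>y. K \<le> ?F y\<close> by (intro cInf_lower bdd_belowI2) auto
  have "\<exists>v\<in>X. ?F v < m + inverse (real (Suc k))" for k
    using cInf_lessD[of "?F ` X" "m + inverse (real (Suc k))"] \<open>X \<noteq> {}\<close> by (auto simp: m_def)
  then obtain s where s_X: "\<And>k. s k \<in> X" and s_F: "\<And>k. ?F (s k) < m + inverse (real (Suc k))"
    by metis
  obtain y where y_X: "y \<in> X" and y_lim: "\<And>i. i < n \<Longrightarrow> (\<lambda>k. s k i) \<longlonglongrightarrow> y i"
    using rn_closed_Cauchy_limit[of n X s, OF closed s_X]
      prox_lin_minimizing_seq_Cauchy[OF convex assms(4-6) m_le s_X s_F] by blast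
  have "(\<lambda>k. ?F (s k)) \<longlonglongrightarrow> ?F y"
    using y_lim by (rule prox_lin_tendsto)
  moreover have "(\<lambda>k. ?F (s k)) \<longlonglongrightarrow> m"
  proof (rule tendsto_sandwich[of "\<lambda>k. m" _ _ "\<lambda>k. m + inverse (real (Suc k))"])
    show "(\<lambda>k. m + inverse (real (Suc k))) \<longlonglongrightarrow> m"
      using tendsto_add[OF tendsto_const LIMSEQ_inverse_real_of_nat, of m] by simp
    show "\<forall>\<^sub>F k in sequentially. m \<le> ?F (s k)"
      using m_le s_X by simp
    show "\<forall>\<^sub>F k in sequentially. ?F (s k) \<le> m + inverse (real (Suc k))"
      using s_F by (simp add: less_imp_le)
  qed simp
  ultimately have "?F y = m"
    by (rule LIMSEQ_unique)
  then show ?thesis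
    using y_X m_le by auto
qed

section \<open>Delay counts and harmonic sums\<close>

lemma card_miss_le: "1 \<le> t \<Longrightarrow> real (card (miss d t)) \<le> real t - 1"
  using card_mono[of "{1..<t}" "miss d t"] by (auto simp: miss_def of_nat_diff)

lemma card_miss_le_sigma_max: "t \<in> {1..T} \<Longrightarrow> card (miss d t) \<le> sigma_max d T"
  unfolding sigma_max_def by (intro Max_ge) auto

lemma sum_card_miss_le_d_tot: "(\<Sum>t=1..T. card (miss d t)) \<le> d_tot d T"
proof -
  have "(\<Sum>t=1..T. card (miss d t)) = (\<Sum>t=1..T. card {\<tau>. \<tau> \<in> {1..T} \<and> \<tau> \<in> miss d t})"
    by (intro sum.cong refl arg_cong[where f = card]) (auto simp: miss_def)
  also have "\<dots> = (\<Sum>\<tau>=1..T. card {t. t \<in> {1..T} \<and> \<tau> \<in> miss d t})"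
    using sum.swap_restrict[of "{1..T}" "{1..T}" "\<lambda>_ _. 1 :: nat" "\<lambda>t \<tau>. \<tau> \<in> miss d t"] by simp
  also have "\<dots> \<le> (\<Sum>\<tau>=1..T. card {\<tau> + 1..\<tau> + d \<tau>})"
    by (intro sum_mono card_mono) (auto simp: miss_def obs_def)
  finally show ?thesis
    by (simp add: d_tot_def)
qed

lemma harm_le_one_plus_ln: "1 \<le> T \<Longrightarrow> harm T \<le> 1 + ln (real T)"
  using euler_mascheroni_sequence_decreasing[of 1 T] by (simp add: harm_def)

lemma harm_le_three_ln: "2 \<le> T \<Longrightarrow> harm T \<le> 3 * ln (real T)"
proof -
  assume "2 \<le> T"
  then have "ln 2 \<le> ln (real T)"
    by simp
  then show ?thesis
    using ln2_ge_two_thirds harm_le_one_plus_ln[of T] \<open>2 \<le> T\<close> by linarith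
qed

lemma sum_div_pred_le_harm:
  fixes a :: "nat \<Rightarrow> real"
  assumes "0 \<le> \<sigma>" and "\<And>t. t \<in> {1..T} \<Longrightarrow> a t \<le> \<sigma>"
  shows "(\<Sum>t=1..T. a t / (real t - 1)) \<le> 2 * \<sigma> * harm T"
proof -
  have "a t / (real t - 1) \<le> 2 * \<sigma> * inverse (real t)" if "t \<in> {1..T}" for t
  proof (cases "t = 1")
    case False
    then have "2 \<le> real t"
      using that by auto
    have "a t / (real t - 1) \<le> \<sigma> / (real t - 1)"
      using assms(2)[OF that] \<open>2 \<le> real t\<close> by (intro divide_right_mono) auto
    also have "\<dots> \<le> 2 * \<sigma> * inverse (real t)"
      using mult_left_mono[of "real t" "2 * (real t - 1)" \<sigma>] assms(1) \<open>2 \<le> real t\<close>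
      by (simp add: field_simps)
    finally show ?thesis .
  qed (use assms in simp)
  then have "(\<Sum>t=1..T. a t / (real t - 1)) \<le> (\<Sum>t=1..T. 2 * \<sigma> * inverse (real t))"
    by (rule sum_mono)
  then show ?thesis
    by (simp add: harm_def sum_distrib_left)
qed

lemma card_pred_atMost_le: "0 \<le> K \<Longrightarrow> real (card {t \<in> {1..T}. 1 < t \<and> real t - 1 \<le> K}) \<le> K"
proof -
  assume "0 \<le> K"
  have "{t \<in> {1..T}. 1 < t \<and> real t - 1 \<le> K} \<subseteq> {2..nat \<lfloor>K\<rfloor> + 1}"
  proof
    fix t
    assume "t \<in> {t \<in> {1..T}. 1 < t \<and> real t - 1 \<le> K}"
    then have "1 < t" and "real (t - 1) \<le> K"
      by (auto simp: of_nat_diff)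
    then show "t \<in> {2..nat \<lfloor>K\<rfloor> + 1}"
      using le_nat_floor[of "t - 1" K] by auto
  qed
  then have "card {t \<in> {1..T}. 1 < t \<and> real t - 1 \<le> K} \<le> nat \<lfloor>K\<rfloor>"
    using card_mono[of "{2..nat \<lfloor>K\<rfloor> + 1}"] by fastforce
  then show ?thesis
    using \<open>0 \<le> K\<close> of_nat_floor[of K] by linarith
qed

text \<open>Split at \<open>t - 1 = \<surd>D\<close>: each earlier term is at most 1, each later one at most \<open>a\<^sub>t / \<surd>D\<close>.\<close>
lemma sum_div_pred_le_two_sqrt:
  fixes a :: "nat \<Rightarrow> real"
  assumes nonneg: "\<And>t. t \<in> {1..T} \<Longrightarrow> 0 \<le> a t" and le: "\<And>t. t \<in> {1..T} \<Longrightarrow> a t \<le> real t - 1"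
    and total: "(\<Sum>t=1..T. a t) \<le> D"
  shows "(\<Sum>t=1..T. a t / (real t - 1)) \<le> 2 * sqrt D"
proof (cases "sqrt D = 0")
  case True
  then have "D = 0"
    by simp
  then have "(\<Sum>t=1..T. a t) = 0"
    using total sum_nonneg[of "{1..T}" a] nonneg by simp
  then have "\<forall>t\<in>{1..T}. a t = 0"
    by (subst (asm) sum_nonneg_eq_0_iff) (use nonneg in auto)
  then show ?thesis
    using \<open>D = 0\<close> by simp
next
  case False
  define K where "K = sqrt D"
  have "0 < K" "K * K = D"
    using False total sum_nonneg[of "{1..T}" a] nonneg by (auto simp: K_def)
  let ?P = "\<lambda>t. 1 < t \<and> real t - 1 \<le> K"
  have "a t / (real t - 1) \<le> of_bool (?P t) + a t / K" if "t \<in> {1..T}" for t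
  proof (cases "1 < t")
    case True
    show ?thesis
    proof (cases "real t - 1 \<le> K")
      case True
      have "a t / (real t - 1) \<le> 1"
        using le[OF that] \<open>1 < t\<close> by (simp add: pos_divide_le_eq)
      moreover have "0 \<le> a t / K"
        using nonneg[OF that] \<open>0 < K\<close> by simp
      moreover have "of_bool (?P t) = (1 :: real)"
        using True \<open>1 < t\<close> by simp
      ultimately show ?thesis
        by linarith
    next
      case False
      then show ?thesis
        using nonneg[OF that] \<open>0 < K\<close> by (simp add: divide_left_mono)
    qed
  next
    case False
    then have "t = 1"
      using that by simp
    then show ?thesis
      using nonneg[OF that] \<open>0 < K\<close> by simp
  qed
  then have "(\<Sum>t=1..T. a t / (real t - 1)) \<le> (\<Sum>t=1..T. of_bool (?P t) + a t / K)"
    by (rule sum_mono)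
  also have "\<dots> = real (card {t \<in> {1..T}. ?P t}) + (\<Sum>t=1..T. a t) / K"
    by (simp add: sum.distrib sum_divide_distrib Int_def)
  also have "\<dots> \<le> K + D / K"
    using card_pred_atMost_le[of K T] total \<open>0 < K\<close> by (simp add: divide_right_mono add_mono)
  also have "\<dots> = 2 * sqrt D"
    using \<open>K * K = D\<close> \<open>0 < K\<close> by (simp add: K_def field_simps)
  finally show ?thesis .
qed

section \<open>Analysis of Delayed FTRL\<close>

locale delayed_ftrl_analysis =
  fixes n :: nat and lam G :: real and X :: "(nat \<Rightarrow> real) set"
    and f :: "nat \<Rightarrow> (nat \<Rightarrow> real) \<Rightarrow> real"
    and gradf :: "nat \<Rightarrow> (nat \<Rightarrow> real) \<Rightarrow> nat \<Rightarrow> real"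
    and d :: "nat \<Rightarrow> nat" and x :: "nat \<Rightarrow> nat \<Rightarrow> real" and T :: nat
  assumes X_closed: "rn_closed n X" and X_convex: "cvx_set X"
    and lam_pos: "0 < lam" and G_nonneg: "0 \<le> G"
    and strongly_convex: "\<And>t. t \<in> {1..T} \<Longrightarrow> strongly_cvx n lam X (f t) (gradf t)"
    and grad_bounded: "\<And>t z. t \<in> {1..T} \<Longrightarrow> z \<in> X \<Longrightarrow> nrm n (gradf t z) \<le> G"
    and run: "delayed_ftrl n lam X d gradf x T"
begin

definition g :: "nat \<Rightarrow> nat \<Rightarrow> real" where
  "g \<tau> = gradf \<tau> (x \<tau>)"

definition surrogate :: "nat \<Rightarrow> (nat \<Rightarrow> real) \<Rightarrow> real" where
  "surrogate t y = ip n (g t) y + lam / 2 * (nrm n (vdiff y (x t)))\<^sup>2"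

definition cum_surrogate :: "nat \<Rightarrow> (nat \<Rightarrow> real) \<Rightarrow> real" where
  "cum_surrogate k = prox_lin n lam {1..k} {1..k} g x"

text \<open>In round 1 every point minimises the empty sum; choosing \<open>x\<^sub>1\<close> there makes the first
  drift vanish.\<close>
definition leader :: "nat \<Rightarrow> nat \<Rightarrow> real" where
  "leader t = (if t = 1 then x 1
     else SOME w. w \<in> X \<and> (\<forall>z\<in>X. cum_surrogate (t - 1) w \<le> cum_surrogate (t - 1) z))"

lemma x_in_X: "t \<in> {1..T} \<Longrightarrow> x t \<in> X"
  using run unfolding delayed_ftrl_def
  by (cases t) (auto simp: le_Suc_eq Suc_le_eq elim!: allE[of _ "t - 1"])

lemma x_minimizes:
  assumes "t \<in> {2..T}" and "z \<in> X"
  shows "prox_lin n lam (obs d t) {1..t - 1} g x (x t) \<le> prox_lin n lam (obs d t) {1..t - 1} g x z"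
proof -
  have "1 \<le> t - 1 \<and> t - 1 < T"
    using assms(1) by auto
  then have "\<forall>y\<in>X. ftrl_obj n lam d gradf x (t - 1) (x (t - 1 + 1)) \<le> ftrl_obj n lam d gradf x (t - 1) y"
    using run unfolding delayed_ftrl_def by blast
  then show ?thesis
    using assms by (simp add: ftrl_obj_def prox_lin_def g_def)
qed

lemma leader_in_X_and_minimizes:
  assumes "1 \<le> t"
  shows "leader t \<in> X \<and> (\<forall>z\<in>X. cum_surrogate (t - 1) (leader t) \<le> cum_surrogate (t - 1) z)"
proof (cases "t = 1")
  case True
  then show ?thesis
    using x_in_X[of 1] run by (simp add: leader_def cum_surrogate_def prox_lin_def delayed_ftrl_def)
next
  case False
  have "X \<noteq> {}" and "{1..t - 1} \<noteq> {}"
    using run False assms by (auto simp: delayed_ftrl_def)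
  then have "\<exists>w. w \<in> X \<and> (\<forall>z\<in>X. cum_surrogate (t - 1) w \<le> cum_surrogate (t - 1) z)"
    unfolding cum_surrogate_def using prox_lin_has_min[OF X_closed X_convex] lam_pos by blast
  from someI_ex[OF this] show ?thesis
    unfolding leader_def using False by simp
qed

lemma leader_in_X: "1 \<le> t \<Longrightarrow> leader t \<in> X"
  using leader_in_X_and_minimizes by blast

lemma cum_surrogate_growth:
  assumes "1 \<le> t" and "z \<in> X"
  shows "cum_surrogate (t - 1) (leader t) + lam * real (t - 1) / 2 * (nrm n (vdiff z (leader t)))\<^sup>2
    \<le> cum_surrogate (t - 1) z"
proof -
  have "prox_lin n lam {1..t - 1} {1..t - 1} g x (leader t)
      + lam * card {1..t - 1} / 2 * (nrm n (vdiff z (leader t)))\<^sup>2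
    \<le> prox_lin n lam {1..t - 1} {1..t - 1} g x z"
    using leader_in_X_and_minimizes[OF assms(1)] unfolding cum_surrogate_def
    by (intro prox_lin_quadratic_growth[OF X_convex leader_in_X[OF assms(1)] assms(2)]) auto
  then show ?thesis
    by (simp add: cum_surrogate_def)
qed

lemma cum_surrogate_eq_sum: "cum_surrogate k y = (\<Sum>s=1..k. surrogate s y)"
  unfolding cum_surrogate_def prox_lin_def surrogate_def by (simp add: sum.distrib sum_distrib_left)

lemma cum_surrogate_Suc: "cum_surrogate (Suc k) y = cum_surrogate k y + surrogate (Suc k) y"
  unfolding cum_surrogate_eq_sum by simp

lemma cum_surrogate_split:
  "cum_surrogate k y = prox_lin n lam (obs d (k + 1)) {1..k} g x y + (\<Sum>\<tau>\<in>miss d (k + 1). ip n (g \<tau>) y)"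
proof -
  have "{1..k} = obs d (k + 1) \<union> miss d (k + 1)" and "obs d (k + 1) \<inter> miss d (k + 1) = {}"
    unfolding miss_def obs_def by auto
  moreover have "finite (obs d (k + 1))"
    by (rule finite_subset[of _ "{1..k}"]) (auto simp: obs_def)
  ultimately have "(\<Sum>\<tau>\<in>{1..k}. ip n (g \<tau>) y)
      = (\<Sum>\<tau>\<in>obs d (k + 1). ip n (g \<tau>) y) + (\<Sum>\<tau>\<in>miss d (k + 1). ip n (g \<tau>) y)"
    by (metis finite_Un finite_atLeastAtMost sum.union_disjoint)
  then show ?thesis
    unfolding cum_surrogate_def prox_lin_def by simp
qed

lemma regret_le_surrogate_regret:
  assumes "t \<in> {1..T}" and "u \<in> X"
  shows "f t (x t) - f t u \<le> surrogate t (x t) - surrogate t u"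
proof -
  have "f t (x t) + ip n (g t) (vdiff u (x t)) + lam / 2 * (nrm n (vdiff u (x t)))\<^sup>2 \<le> f t u"
    using strongly_convex[OF assms(1)] x_in_X[OF assms(1)] assms(2)
    unfolding strongly_cvx_def g_def by blast
  then show ?thesis
    unfolding surrogate_def ip_vdiff by simp
qed

lemma be_the_leader:
  assumes "v \<in> X"
  shows "(\<Sum>t=1..k. surrogate t (leader (t + 1))) \<le> cum_surrogate k v"
  using assms
proof (induction k arbitrary: v)
  case 0
  then show ?case
    by (simp add: cum_surrogate_def prox_lin_def)
next
  case (Suc k)
  let ?y = "leader (Suc k + 1)"
  have "(\<Sum>t=1..Suc k. surrogate t (leader (t + 1))) \<le> cum_surrogate k ?y + surrogate (Suc k) ?y"
    using Suc.IH[of ?y] leader_in_X[of "Suc k + 1"] by simp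
  also have "\<dots> = cum_surrogate (Suc k) ?y"
    by (rule cum_surrogate_Suc[symmetric])
  also have "\<dots> \<le> cum_surrogate (Suc k) v"
    using leader_in_X_and_minimizes[of "Suc k + 1"] Suc.prems by simp
  finally show ?case .
qed

lemma g_bounded: "t \<in> {1..T} \<Longrightarrow> nrm n (g t) \<le> G"
  unfolding g_def by (intro grad_bounded x_in_X)

text \<open>Both \<open>x\<^sub>t\<close> and \<open>leader t\<close> minimise \<open>\<lambda>(t - 1)\<close>-strongly convex objectives that differ
  only by the linear term of the \<open>|m\<^sub>t|\<close> missing gradients.\<close>
lemma leader_drift:
  assumes "t \<in> {1..T}"
  shows "nrm n (vdiff (x t) (leader t)) \<le> G * card (miss d t) / (lam * (real t - 1))"
proof (cases "t = 1")
  case True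
  then show ?thesis
    by (simp add: leader_def)
next
  case False
  then have t: "t \<in> {2..T}" "1 \<le> t" and "0 < real t - 1"
    using assms by auto
  define e where "e = nrm n (vdiff (x t) (leader t))"
  have "prox_lin n lam (obs d t) {1..t - 1} g x (x t) + lam * card {1..t - 1} / 2 * e\<^sup>2
      \<le> prox_lin n lam (obs d t) {1..t - 1} g x (leader t)"
    unfolding e_def nrm_vdiff_commute[of n "x t"]
    by (intro prox_lin_quadratic_growth[OF X_convex x_in_X[OF assms] leader_in_X[OF t(2)]]
        x_minimizes[OF t(1)])
  moreover have "cum_surrogate (t - 1) (leader t) + lam * real (t - 1) / 2 * e\<^sup>2
      \<le> cum_surrogate (t - 1) (x t)"
    using cum_surrogate_growth[OF t(2) x_in_X[OF assms]] by (simp add: e_def)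
  ultimately have "lam * real (t - 1) * e\<^sup>2
      \<le> (\<Sum>\<tau>\<in>miss d t. ip n (g \<tau>) (x t)) - (\<Sum>\<tau>\<in>miss d t. ip n (g \<tau>) (leader t))"
    using cum_surrogate_split[of "t - 1" "x t"] cum_surrogate_split[of "t - 1" "leader t"] t(2)
    by simp
  also have "\<dots> = (\<Sum>\<tau>\<in>miss d t. ip n (g \<tau>) (vdiff (x t) (leader t)))"
    by (simp add: ip_vdiff sum_subtractf)
  also have "\<dots> \<le> (\<Sum>\<tau>\<in>miss d t. G * e)"
    using assms unfolding e_def
    by (intro sum_mono ip_le_mult_nrm g_bounded) (auto simp: miss_def)
  finally have "lam * (real t - 1) * e\<^sup>2 \<le> G * card (miss d t) * e"
    using t(2) by (simp add: of_nat_diff mult_ac)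
  then show ?thesis
    unfolding e_def using lam_pos G_nonneg \<open>0 < real t - 1\<close>
    by (intro le_divide_if_mult_sq_le nrm_nonneg) auto
qed

lemma leader_drift_le: "t \<in> {1..T} \<Longrightarrow> nrm n (vdiff (x t) (leader t)) \<le> G / lam"
proof -
  assume t: "t \<in> {1..T}"
  show ?thesis
  proof (cases "t = 1")
    case True
    then show ?thesis
      using G_nonneg lam_pos by (simp add: leader_def)
  next
    case False
    then have "0 < real t - 1"
      using t by auto
    have "G * card (miss d t) \<le> G * (real t - 1)"
      using card_miss_le[of t d] t G_nonneg by (intro mult_left_mono) auto
    then have "G * card (miss d t) / (lam * (real t - 1)) \<le> G * (real t - 1) / (lam * (real t - 1))"
      using lam_pos \<open>0 < real t - 1\<close> by (intro divide_right_mono) auto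
    also have "\<dots> = G / lam"
      using \<open>0 < real t - 1\<close> by simp
    finally show ?thesis
      using leader_drift[OF t] by linarith
  qed
qed

lemma surrogate_diff:
  "surrogate t a - surrogate t b
     = ip n (g t) (vdiff a b) + lam * ip n (vdiff a (x t)) (vdiff a b) - lam / 2 * (nrm n (vdiff a b))\<^sup>2"
  unfolding surrogate_def nrm_sq ip_def vdiff_def
  by (simp add: sum_distrib_left sum_subtractf[symmetric] sum.distrib[symmetric]
      power2_eq_square algebra_simps)

lemma surrogate_drift_cost:
  assumes "t \<in> {1..T}"
  shows "surrogate t (x t) - surrogate t (leader t) \<le> G\<^sup>2 * card (miss d t) / (lam * (real t - 1))"
proof -
  have "surrogate t (x t) - surrogate t (leader t) \<le> ip n (g t) (vdiff (x t) (leader t))"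
    unfolding surrogate_def ip_vdiff using lam_pos by simp
  also have "\<dots> \<le> G * nrm n (vdiff (x t) (leader t))"
    by (intro ip_le_mult_nrm g_bounded assms)
  also have "\<dots> \<le> G * (G * card (miss d t) / (lam * (real t - 1)))"
    by (intro mult_left_mono leader_drift assms G_nonneg)
  finally show ?thesis
    by (simp add: power2_eq_square)
qed

lemma leader_step_lower:
  assumes "1 \<le> t"
  shows "lam * (2 * real t - 1) / 2 * (nrm n (vdiff (leader t) (leader (t + 1))))\<^sup>2
    \<le> surrogate t (leader t) - surrogate t (leader (t + 1))"
proof -
  define r where "r = nrm n (vdiff (leader t) (leader (t + 1)))"
  have "cum_surrogate (t - 1) (leader t) + lam * real (t - 1) / 2 * r\<^sup>2 \<le> cum_surrogate (t - 1) (leader (t + 1))"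
    using cum_surrogate_growth[OF assms leader_in_X[of "t + 1"]]
    unfolding r_def nrm_vdiff_commute[of n "leader t"] by simp
  moreover have "cum_surrogate t (leader (t + 1)) + lam * real t / 2 * r\<^sup>2 \<le> cum_surrogate t (leader t)"
    using cum_surrogate_growth[of "t + 1" "leader t"] leader_in_X[OF assms] by (simp add: r_def)
  moreover have "cum_surrogate t = (\<lambda>y. cum_surrogate (t - 1) y + surrogate t y)"
    using cum_surrogate_Suc[of "t - 1"] assms by (simp add: fun_eq_iff)
  moreover have "lam * (2 * real t - 1) / 2 * r\<^sup>2 = lam * real (t - 1) / 2 * r\<^sup>2 + lam * real t / 2 * r\<^sup>2"
    using assms by (simp add: of_nat_diff field_simps)
  ultimately show ?thesis
    unfolding r_def[symmetric] by simp
qed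

lemma leader_step_upper:
  assumes "t \<in> {1..T}"
  shows "surrogate t (leader t) - surrogate t (leader (t + 1))
    \<le> 2 * G * nrm n (vdiff (leader t) (leader (t + 1)))
      - lam / 2 * (nrm n (vdiff (leader t) (leader (t + 1))))\<^sup>2"
proof -
  define r where "r = nrm n (vdiff (leader t) (leader (t + 1)))"
  have "ip n (vdiff (leader t) (x t)) (vdiff (leader t) (leader (t + 1)))
      \<le> nrm n (vdiff (leader t) (x t)) * r"
    unfolding r_def by (rule ip_le_nrm_mult)
  also have "\<dots> \<le> G / lam * r"
    using leader_drift_le[OF assms] nrm_vdiff_commute[of n "leader t"]
    by (intro mult_right_mono) (auto simp: r_def nrm_nonneg)
  finally have "lam * ip n (vdiff (leader t) (x t)) (vdiff (leader t) (leader (t + 1))) \<le> G * r"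
    using lam_pos by (simp add: field_simps)
  moreover have "ip n (g t) (vdiff (leader t) (leader (t + 1))) \<le> G * r"
    unfolding r_def by (intro ip_le_mult_nrm g_bounded assms)
  ultimately show ?thesis
    unfolding surrogate_diff r_def by linarith
qed

lemma leader_stability:
  assumes "t \<in> {1..T}"
  shows "surrogate t (leader t) - surrogate t (leader (t + 1)) \<le> 4 * G\<^sup>2 / (lam * real t)"
proof -
  define r where "r = nrm n (vdiff (leader t) (leader (t + 1)))"
  have t: "1 \<le> t"
    using assms by simp
  have lower: "lam * (2 * real t - 1) / 2 * r\<^sup>2 \<le> surrogate t (leader t) - surrogate t (leader (t + 1))"
    unfolding r_def using t by (rule leader_step_lower)
  have upper: "surrogate t (leader t) - surrogate t (leader (t + 1)) \<le> 2 * G * r - lam / 2 * r\<^sup>2"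
    unfolding r_def using assms by (rule leader_step_upper)
  have "lam * (2 * real t - 1) / 2 * r\<^sup>2 = lam * real t * r\<^sup>2 - lam / 2 * r\<^sup>2"
    by (simp add: field_simps)
  then have "lam * real t * r\<^sup>2 \<le> 2 * G * r"
    using lower upper by linarith
  then have "r \<le> 2 * G / (lam * real t)"
    using lam_pos G_nonneg t by (intro le_divide_if_mult_sq_le) (auto simp: r_def nrm_nonneg)
  then have "2 * G * r \<le> 2 * G * (2 * G / (lam * real t))"
    using G_nonneg by (intro mult_left_mono) auto
  then have "2 * G * r \<le> 4 * G\<^sup>2 / (lam * real t)"
    by (simp add: power2_eq_square)
  moreover have "0 \<le> lam / 2 * r\<^sup>2"
    using lam_pos by simp
  ultimately show ?thesis
    using upper by linarith
qed

theorem regret_bound: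
  assumes "u \<in> X"
  shows "(\<Sum>t=1..T. f t (x t) - f t u)
    \<le> G\<^sup>2 / lam * (4 * harm T + (\<Sum>t=1..T. card (miss d t) / (real t - 1)))"
proof -
  have "(\<Sum>t=1..T. f t (x t) - f t u) \<le> (\<Sum>t=1..T. surrogate t (x t) - surrogate t u)"
    using assms by (intro sum_mono regret_le_surrogate_regret)
  also have "\<dots> = (\<Sum>t=1..T. surrogate t (x t) - surrogate t (leader t))
      + (\<Sum>t=1..T. surrogate t (leader t) - surrogate t (leader (t + 1)))
      + ((\<Sum>t=1..T. surrogate t (leader (t + 1))) - cum_surrogate T u)"
    by (simp add: sum_subtractf cum_surrogate_eq_sum)
  also have "\<dots> \<le> (\<Sum>t=1..T. G\<^sup>2 * card (miss d t) / (lam * (real t - 1)))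
      + (\<Sum>t=1..T. 4 * G\<^sup>2 / (lam * real t)) + 0"
    using be_the_leader[OF assms, of T]
    by (intro add_mono sum_mono surrogate_drift_cost leader_stability) auto
  also have "\<dots> = G\<^sup>2 / lam * (4 * harm T + (\<Sum>t=1..T. card (miss d t) / (real t - 1)))"
    unfolding harm_def distrib_left sum_distrib_left by (simp add: field_simps)
  finally show ?thesis .
qed

theorem regret_le_log_plus_min:
  assumes "2 \<le> T" and "u \<in> X"
  shows "(\<Sum>t=1..T. f t (x t) - f t u)
    \<le> 12 * (G\<^sup>2 / lam) * (ln (real T) +
         min (real (sigma_max d T) * ln (real T)) (sqrt (real (d_tot d T))))"
proof -
  let ?S = "\<Sum>t=1..T. card (miss d t) / (real t - 1)"
  let ?\<sigma> = "real (sigma_max d T)" and ?L = "ln (real T)" and ?D = "real (d_tot d T)"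
  have harm: "harm T \<le> 3 * ?L"
    using assms(1) by (rule harm_le_three_ln)
  have "?S \<le> 2 * ?\<sigma> * harm T"
    by (intro sum_div_pred_le_harm) (simp_all add: card_miss_le_sigma_max)
  also have "\<dots> \<le> 2 * ?\<sigma> * (3 * ?L)"
    using harm by (intro mult_left_mono) auto
  finally have S_sigma: "?S \<le> 6 * (?\<sigma> * ?L)"
    by simp
  have miss_total: "(\<Sum>t=1..T. real (card (miss d t))) \<le> ?D"
    using sum_card_miss_le_d_tot[of d T] by (simp flip: of_nat_sum)
  have S_sqrt: "?S \<le> 2 * sqrt ?D"
  proof (rule sum_div_pred_le_two_sqrt)
    fix t
    assume "t \<in> {1..T}"
    then show "real (card (miss d t)) \<le> real t - 1"
      by (intro card_miss_le) simp
  qed (use miss_total in simp_all)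
  have "0 \<le> ?\<sigma> * ?L"
    using assms(1) by simp
  then have "4 * harm T + ?S \<le> 12 * (?L + ?\<sigma> * ?L)"
    using harm S_sigma unfolding distrib_left by linarith
  moreover have "4 * harm T + ?S \<le> 12 * (?L + sqrt ?D)"
    using harm S_sqrt real_sqrt_ge_zero[of ?D] unfolding distrib_left by linarith
  ultimately have bound: "4 * harm T + ?S \<le> 12 * (?L + min (?\<sigma> * ?L) (sqrt ?D))"
    by (simp add: min_def)
  have "(\<Sum>t=1..T. f t (x t) - f t u) \<le> G\<^sup>2 / lam * (4 * harm T + ?S)"
    by (rule regret_bound[OF assms(2)])
  also have "\<dots> \<le> G\<^sup>2 / lam * (12 * (?L + min (?\<sigma> * ?L) (sqrt ?D)))"
    using bound lam_pos by (intro mult_left_mono) auto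
  also have "\<dots> = 12 * (G\<^sup>2 / lam) * (?L + min (?\<sigma> * ?L) (sqrt ?D))"
    by (simp only: mult_ac)
  finally show ?thesis .
qed

end

text \<open>Only the first-order strong convexity inequality and the gradient bound are used.\<close>
theorem theorem3p1:
  shows "\<exists>C>0. \<forall>(T::nat) (n::nat) (X::(nat \<Rightarrow> real) set) (lam::real) (G::real)
      (f::nat \<Rightarrow> (nat \<Rightarrow> real) \<Rightarrow> real) (gradf::nat \<Rightarrow> (nat \<Rightarrow> real) \<Rightarrow> (nat \<Rightarrow> real))
      (d::nat \<Rightarrow> nat) (x::nat \<Rightarrow> (nat \<Rightarrow> real)).
      T \<ge> 2 \<and> n \<ge> 1 \<and> X \<subseteq> Rn n \<and> X \<noteq> {} \<and> rn_closed n X \<and> cvx_set X \<and>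
      lam > 0 \<and> G \<ge> 0 \<and>
      (\<forall>t\<in>{1..T}. t + d t \<le> T) \<and>
      (\<forall>t\<in>{1..T}. cvx_fun X (f t) \<and>
          (\<forall>z\<in>X. has_grad n (f t) (gradf t z) z) \<and>
          strongly_cvx n lam X (f t) (gradf t) \<and>
          (\<forall>z\<in>X. nrm n (gradf t z) \<le> G)) \<and>
      delayed_ftrl n lam X d gradf x T
      \<longrightarrow> (\<forall>u\<in>X. (\<Sum>t=1..T. f t (x t) - f t u)
            \<le> C * (G\<^sup>2 / lam) * (ln (real T) +
                 min (real (sigma_max d T) * ln (real T)) (sqrt (real (d_tot d T)))))"
  by (intro exI[of _ 12] conjI allI impI ballI delayed_ftrl_analysis.regret_le_log_plus_min
      delayed_ftrl_analysis.intro) auto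

end
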